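(* Let $K\subset\mathbb H^n$ be a bounded domain with smooth boundary, let $\hat K=\pi(K)\subset\mathbb R^n$ and $\widehat{\partial K}=\pi(\partial K)$, and let $V=\cosh d(\cdot,N)$, $N=(1,0)$, so $V(X)=\sqrt{1+|x|^2}$ at $X=(\sqrt{1+|x|^2},x)$. Then, identifying $K$ with $\hat K$ and $\partial K$ with $\widehat{\partial K}$ via $\pi$, and using at a point $x\in\widehat{\partial K}$ coordinates with $\hat g_{ij}=\delta_{ij}$ at $x$: (i) $V\, d\mathrm{vol}=d\widehat{\mathrm{vol}}$; (ii) $dA=\left(\frac{1+\hat{u}^2}{1+|x|^2}\right)^{1/2}d\hat{A}$; (iii) $V h_{ij}-V_{,\nu}\, g_{ij}=\left(\frac{1+|x|^2}{1+\hat{u}^2}\right)^{1/2}\hat{h}_{ij}$; (iv) $H_{n-1}(\tilde\kappa)=\left(\frac{1+|x|^2}{1+\hat{u}^2}\right)^{\frac{n+1}{2}}H_{n-1}(\hat{\kappa})$.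
   Context: Hyperboloid model: $\mathbb R^{n,1}$ is $\mathbb R^{n+1}$ with $\langle X,Y\rangle=-x_0y_0+\sum_{i=1}^n x_iy_i$, $\mathbb H^n=\{X=(x_0,x):\langle X,X\rangle=-1,\ x_0>0\}$; $d$ is the hyperbolic distance. $\pi:\mathbb H^n\to\mathbb R^n$, $(\sqrt{1+|x|^2},x)\mapsto x$. $d\mathrm{vol}$, $dA$ are the hyperbolic volume element and area element of $\partial K$; $d\widehat{\mathrm{vol}}$, $d\hat A$ the Euclidean volume element and area element of $\widehat{\partial K}$. For $\partial K$: $g_{ij}$ induced metric, $\nu$ unit outward normal, $h_{ij}$ second fundamental form, $\kappa_i$ principal curvatures, $V_{,\nu}$ the normal derivative of $V$, $\tilde\kappa_i=V\kappa_i-V_{,\nu}$ and $H_{n-1}(\tilde\kappa)=\prod_{i=1}^{n-1}\tilde\kappa_i$. For $\widehat{\partial K}\subset\mathbb R^n$: $\hat\nu$ Euclidean unit outward normal, $\hat u=x\cdot\hat\nu$ support function, $\hat h_{ij}$ second fundamental form, $\hat\kappa_i$ principal curvatures, $H_{n-1}(\hat\kappa)=\prod_i\hat\kappa_i$ the Gauss curvature. *)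

theory Defs
  imports "HOL-Analysis.Analysis"
begin

definition mink :: "real \<times> (real^'n) \<Rightarrow> real \<times> (real^'n) \<Rightarrow> real" where
  "mink X Y = - fst X * fst Y + snd X \<bullet> snd Y"

definition hyperboloid :: "(real \<times> (real^'n)) set" where
  "hyperboloid = {X. mink X X = -1 \<and> fst X > 0}"

definition hdist :: "real \<times> (real^'n) \<Rightarrow> real \<times> (real^'n) \<Rightarrow> real" where
  "hdist X Y = arcosh (- mink X Y)"

definition Npt :: "real \<times> (real^'n)" where
  "Npt = (1, 0)"

definition Vh :: "real \<times> (real^'n) \<Rightarrow> real" where
  "Vh X = cosh (hdist X Npt)"

definition proj :: "real \<times> (real^'n) \<Rightarrow> real^'n" where
  "proj X = snd X"

definition lift :: "real^'n \<Rightarrow> real \<times> (real^'n)" where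
  "lift x = (sqrt (1 + (norm x)\<^sup>2), x)"

text \<open>C-infinity: differentiable, and all directional derivatives are again C-infinity.\<close>
coinductive smooth_on :: "'a::real_normed_vector set \<Rightarrow> ('a \<Rightarrow> 'b::real_normed_vector) \<Rightarrow> bool"
  where "f differentiable_on S \<Longrightarrow> (\<And>v. smooth_on S (\<lambda>x. frechet_derivative f (at x) v))
         \<Longrightarrow> smooth_on S f"

definition pd :: "(real^'k \<Rightarrow> 'b::real_normed_vector) \<Rightarrow> 'k \<Rightarrow> real^'k \<Rightarrow> 'b" where
  "pd f i u = frechet_derivative f (at u) (axis i 1)"

definition pd2 :: "(real^'k \<Rightarrow> 'b::real_normed_vector) \<Rightarrow> 'k \<Rightarrow> 'k \<Rightarrow> real^'k \<Rightarrow> 'b" where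
  "pd2 f i j u = pd (\<lambda>v. pd f j v) i u"

definition smooth_bounded_domain :: "(real^'n) set \<Rightarrow> bool" where
  "smooth_bounded_domain S \<longleftrightarrow> open S \<and> connected S \<and> bounded S \<and> S \<noteq> {} \<and>
     (\<forall>p\<in>frontier S. \<exists>W \<rho>. open W \<and> p \<in> W \<and> smooth_on W (\<rho> :: real^'n \<Rightarrow> real) \<and>
        (\<forall>y\<in>W. frechet_derivative \<rho> (at y) \<noteq> (\<lambda>_. 0)) \<and>
        S \<inter> W = {y\<in>W. \<rho> y < 0})"

text \<open>A bounded domain with smooth boundary in H^n, using pi as global chart
  (pi is a diffeomorphism H^n -> R^n, and K is bounded iff pi(K) is bounded).\<close>
definition hyp_smooth_bounded_domain :: "(real \<times> (real^'n)) set \<Rightarrow> bool" where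
  "hyp_smooth_bounded_domain K \<longleftrightarrow> K \<subseteq> hyperboloid \<and> smooth_bounded_domain (proj ` K)"

definition outward :: "(real^'n) set \<Rightarrow> real^'n \<Rightarrow> real^'n \<Rightarrow> bool" where
  "outward S p w \<longleftrightarrow> (\<exists>\<epsilon>>0. \<forall>t. 0 < t \<and> t < \<epsilon> \<longrightarrow> p + t *\<^sub>R w \<notin> S \<and> p - t *\<^sub>R w \<in> S)"

text \<open>A tangent vector nu of H^n at X points out of K iff d pi (nu) = snd nu points out of pi(K).\<close>
definition hyp_outward :: "(real \<times> (real^'n)) set \<Rightarrow> real \<times> (real^'n) \<Rightarrow> real \<times> (real^'n) \<Rightarrow> bool" where
  "hyp_outward K X \<nu> \<longleftrightarrow> outward (proj ` K) (proj X) (snd \<nu>)"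

text \<open>Hyperbolic volume density in the coordinates x = pi(X): dvol = sqrt(det G) dx.\<close>
definition hyp_metric_coords :: "real^'n \<Rightarrow> real^'n^'n" where
  "hyp_metric_coords x = (\<chi> i j. mink (pd lift i x) (pd lift j x))"

definition hyp_vol_density :: "real^'n \<Rightarrow> real" where
  "hyp_vol_density x = sqrt (det (hyp_metric_coords x))"

text \<open>Induced metrics and second fundamental forms for a parametrisation phi of the
  Euclidean hypersurface, and its lift X = pi^{-1} o phi into H^n.\<close>
definition ghat :: "(real^'m \<Rightarrow> real^'n) \<Rightarrow> real^'m \<Rightarrow> real^'m^'m" where
  "ghat \<phi> u = (\<chi> i j. pd \<phi> i u \<bullet> pd \<phi> j u)"

definition hhat :: "(real^'m \<Rightarrow> real^'n) \<Rightarrow> real^'n \<Rightarrow> real^'m \<Rightarrow> real^'m^'m" where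
  "hhat \<phi> \<nu> u = (\<chi> i j. - (pd2 \<phi> i j u \<bullet> \<nu>))"

definition ghyp :: "(real^'m \<Rightarrow> real^'n) \<Rightarrow> real^'m \<Rightarrow> real^'m^'m" where
  "ghyp \<phi> u = (\<chi> i j. mink (pd (lift \<circ> \<phi>) i u) (pd (lift \<circ> \<phi>) j u))"

text \<open>Second fundamental form of the lifted hypersurface in H^n (Gauss formula:
  h_ij = <nabla_i nu, d_j X> = - <D_i D_j X, nu>, D the flat connection of R^{n,1}).\<close>
definition hhyp :: "(real^'m \<Rightarrow> real^'n) \<Rightarrow> real \<times> (real^'n) \<Rightarrow> real^'m \<Rightarrow> real^'m^'m" where
  "hhyp \<phi> \<nu> u = (\<chi> i j. - mink (pd2 (lift \<circ> \<phi>) i j u) \<nu>)"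

text \<open>Normal derivative of V at X in direction nu (along the geodesic t -> cosh t X + sinh t nu).\<close>
definition V_normal :: "real \<times> (real^'n) \<Rightarrow> real \<times> (real^'n) \<Rightarrow> real" where
  "V_normal X \<nu> = vector_derivative (\<lambda>t. Vh (cosh t *\<^sub>R X + sinh t *\<^sub>R \<nu>)) (at 0)"

text \<open>Gauss-Kronecker curvature: product of principal curvatures = det of the shape
  operator g^{-1} h (principal curvatures are the eigenvalues of the shape operator).\<close>
definition gauss_kronecker :: "real^'m^'m \<Rightarrow> real^'m^'m \<Rightarrow> real" where
  "gauss_kronecker g h = det (matrix_inv g ** h)"

end

theory Submission
  imports Defs
begin

(* Write V = sqrt (1 + |x|^2) for the height of the lift x \<mapsto> (V, x) of R^n onto the hyperboloid.
   Pulled back by the lift, the Minkowski metric is I - x x^T / V^2, of determinant V^-2; this is (i).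
   At a boundary point with Euclidean orthonormal frame e_i and unit normal \<nu>hat, the lifted frame
   vectors are ((x.e_i)/V, e_i), so the induced metric is I - a a^T / V^2 with a_i = x.e_i, and
   |x|^2 = u^2 + |a|^2 (u the support function) gives det = (1 + u^2) / V^2, which is (ii).
   The Minkowski conditions force the unit normal of the lifted hypersurface to be
   \<beta> (u V, \<nu>hat + u x) with \<beta>^2 (1 + u^2) = 1, and \<beta> > 0 because both normals point out of K.
   Along the geodesic in direction \<nu>, V is the first coordinate, so V_\<nu> = \<beta> u V. Differentiating
   the lift twice gives h = \<beta> u g + \<beta> hhat, so V h - V_\<nu> g = \<beta> V hhat, which is (iii);
   (iv) follows by taking determinants, using det g = (\<beta> V)^-2. *)

section \<open>Rank-one perturbations of the identity\<close>

definition outer_product :: "real^'k \<Rightarrow> real^'k \<Rightarrow> real^'k^'k" where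
  "outer_product a b = (\<chi> i j. a $ i * b $ j)"

lemma outer_product_mult_vec: "outer_product a b *v z = (b \<bullet> z) *\<^sub>R a"
  by (simp add: outer_product_def matrix_vector_mult_def inner_vec_def vec_eq_iff
      sum_distrib_left mult_ac)

lemma inner_transpose_mult_vec: "(transpose A *v y) \<bullet> (z::real^'k) = y \<bullet> (A *v z)"
proof -
  have "(transpose A *v y) \<bullet> z = (\<Sum>i\<in>UNIV. \<Sum>j\<in>UNIV. A$j$i * y$j * z$i)"
    by (simp add: inner_vec_def matrix_vector_mult_def transpose_def sum_distrib_right)
  also have "\<dots> = (\<Sum>j\<in>UNIV. \<Sum>i\<in>UNIV. A$j$i * y$j * z$i)"
    by (rule sum.swap)
  finally show ?thesis
    by (simp add: inner_vec_def matrix_vector_mult_def sum_distrib_left mult_ac)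
qed

lemma orthogonal_conj_outer_product:
  assumes "orthogonal_matrix Q"
  shows "Q ** (mat 1 - c *\<^sub>R outer_product a a) ** transpose Q
           = mat 1 - c *\<^sub>R outer_product (Q *v a) (Q *v a)"
proof (rule matrix_eq[THEN iffD2], intro allI)
  fix y
  have QQ: "Q ** transpose Q = mat 1"
    using assms orthogonal_matrix_def by blast
  have "(Q ** (mat 1 - c *\<^sub>R outer_product a a) ** transpose Q) *v y
        = Q *v (transpose Q *v y) - (c * (a \<bullet> (transpose Q *v y))) *\<^sub>R (Q *v a)"
    by (simp del: transpose_matrix_vector
        add: matrix_vector_mul_assoc[symmetric] matrix_vector_mult_diff_rdistrib
        scaleR_matrix_vector_assoc[symmetric] outer_product_mult_vec
        matrix_vector_mult_diff_distrib matrix_vector_mult_scaleR)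
  also have "\<dots> = y - (c * (y \<bullet> (Q *v a))) *\<^sub>R (Q *v a)"
    by (simp del: transpose_matrix_vector
        add: matrix_vector_mul_assoc QQ inner_commute[of a] inner_transpose_mult_vec)
  finally show "(Q ** (mat 1 - c *\<^sub>R outer_product a a) ** transpose Q) *v y
      = (mat 1 - c *\<^sub>R outer_product (Q *v a) (Q *v a)) *v y"
    by (simp add: matrix_vector_mult_diff_rdistrib scaleR_matrix_vector_assoc[symmetric]
        outer_product_mult_vec inner_commute)
qed

lemma det_identity_minus_outer_product:
  "det (mat 1 - c *\<^sub>R outer_product a a) = 1 - c * (a \<bullet> (a::real^'k))"
proof -
  fix k :: 'k
  define b where "b = norm a *\<^sub>R axis k (1::real)"
  obtain f where f: "orthogonal_transformation f" "f a = b"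
    using orthogonal_transformation_exists[of a b] by (auto simp: b_def)
  have Q: "orthogonal_matrix (matrix f)"
    using f(1) orthogonal_transformation_matrix by blast
  have "det (mat 1 - c *\<^sub>R outer_product a a)
        = det (matrix f ** (mat 1 - c *\<^sub>R outer_product a a) ** transpose (matrix f))"
    using det_orthogonal_matrix[OF Q] by (auto simp: det_mul)
  also have "\<dots> = det (mat 1 - c *\<^sub>R outer_product b b)"
    using f orthogonal_transformation_linear[OF f(1)]
    by (simp add: orthogonal_conj_outer_product[OF Q])
  also have "\<dots> = (\<Prod>i\<in>UNIV. if i = k then 1 - c * (norm a)\<^sup>2 else 1)"
  proof (subst det_diagonal)
    show "(mat 1 - c *\<^sub>R outer_product b b) $ i $ j = 0" if "i \<noteq> j" for i j
      using that by (auto simp: outer_product_def b_def axis_def mat_def)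
    show "(\<Prod>i\<in>UNIV. (mat 1 - c *\<^sub>R outer_product b b) $ i $ i)
        = (\<Prod>i\<in>UNIV. if i = k then 1 - c * (norm a)\<^sup>2 else 1)"
      by (rule prod.cong) (simp_all add: outer_product_def b_def axis_def mat_def power2_eq_square)
  qed
  finally show ?thesis by (simp add: power2_norm_eq_inner)
qed

lemma det_matrix_inv:
  fixes G :: "real^'k^'k"
  assumes "det G \<noteq> 0"
  shows "det (matrix_inv G) = inverse (det G)"
proof -
  have "invertible G"
    using assms invertible_det_nz by blast
  then have "G ** matrix_inv G = mat 1"
    unfolding invertible_def matrix_inv_def by (rule someI_ex[THEN conjunct1])
  then have "det G * det (matrix_inv G) = 1"
    by (metis det_I det_mul)
  then show ?thesis
    using assms by (simp add: field_simps)
qed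

lemma det_scaleR: "det (c *\<^sub>R A) = c ^ CARD('k) * det (A::real^'k^'k)"
proof -
  have "c *\<^sub>R A = (\<chi> i. c *s A $ i)"
    by (simp add: vec_eq_iff)
  then show ?thesis
    by (simp add: det_rows_mul)
qed

lemma gauss_kronecker_scaleR:
  fixes G H :: "real^'k^'k"
  assumes "det G \<noteq> 0"
  shows "gauss_kronecker G (c *\<^sub>R H) = c ^ CARD('k) * det H / det G"
  using assms by (simp add: gauss_kronecker_def det_mul det_matrix_inv det_scaleR field_simps)

lemma gauss_kronecker_identity: "gauss_kronecker (mat 1) H = det H"
  by (simp add: gauss_kronecker_def det_mul det_matrix_inv)

lemma square_powr_half:
  assumes "q > 0"
  shows "(q\<^sup>2) powr (real k / 2) = q ^ k"
proof -
  have "(q\<^sup>2) powr (real k / 2) = (q powr 2) powr (real k / 2)"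
    using assms by (simp add: powr_numeral)
  also have "\<dots> = q powr (2 * (real k / 2))"
    by (rule powr_powr)
  also have "\<dots> = q ^ k"
    using assms by (simp add: powr_realpow)
  finally show ?thesis .
qed

section \<open>The lift of \<open>R^n\<close> onto the hyperboloid\<close>

definition height :: "real^'n \<Rightarrow> real" where
  "height y = sqrt (1 + (norm y)\<^sup>2)"

lemma lift_eq: "lift y = (height y, y)"
  by (simp add: lift_def height_def)

lemma height_square: "(height y)\<^sup>2 = 1 + y \<bullet> y"
  by (simp add: height_def power2_norm_eq_inner)

lemma height_pos: "height y > 0"
  by (simp add: height_def add_pos_nonneg)

lemma has_derivative_height: "(height has_derivative (\<lambda>v. (y \<bullet> v) / height y)) (at y)"
proof -
  have "((\<lambda>y. sqrt (1 + y \<bullet> y)) has_derivative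
      (\<lambda>v. inverse (sqrt (1 + y \<bullet> y)) / 2 * (y \<bullet> v + v \<bullet> y))) (at y)"
    by (auto intro!: derivative_eq_intros simp: add_pos_nonneg)
  also have "(\<lambda>y. sqrt (1 + y \<bullet> y)) = height"
    by (simp add: fun_eq_iff height_def power2_norm_eq_inner)
  also have "(\<lambda>v. inverse (height y) / 2 * (y \<bullet> v + v \<bullet> y)) = (\<lambda>v. (y \<bullet> v) / height y)"
  proof
    fix v
    have "v \<bullet> y = y \<bullet> v"
      by (rule inner_commute)
    then show "inverse (height y) / 2 * (y \<bullet> v + v \<bullet> y) = (y \<bullet> v) / height y"
      by (simp add: field_simps)
  qed
  finally show ?thesis .
qed

lemma has_derivative_lift: "(lift has_derivative (\<lambda>v. ((y \<bullet> v) / height y, v))) (at y)"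
  unfolding lift_eq[abs_def] by (auto intro!: derivative_eq_intros has_derivative_height)

lemma pd_lift: "pd lift i y = (y $ i / height y, axis i 1)"
  by (simp add: pd_def frechet_derivative_at[OF has_derivative_lift, symmetric] inner_axis)

lemma mink_Pair [simp]: "mink (a, v) (b, w) = - a * b + v \<bullet> w"
  by (simp add: mink_def)

lemma Vh_eq_fst:
  assumes "X \<in> hyperboloid"
  shows "Vh X = fst X"
proof -
  have "(fst X)\<^sup>2 = 1 + snd X \<bullet> snd X" "fst X > 0"
    using assms by (auto simp: hyperboloid_def mink_def power2_eq_square)
  then have "fst X \<ge> 1"
    using power2_le_imp_le[of 1 "fst X"] by simp
  then show ?thesis
    by (simp add: Vh_def hdist_def mink_def Npt_def)
qed

lemma lift_in_hyperboloid: "lift y \<in> hyperboloid"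
  using height_square[of y] height_pos[of y]
  by (simp add: hyperboloid_def lift_eq power2_eq_square)

lemma Vh_lift: "Vh (lift y) = height y"
  using Vh_eq_fst[OF lift_in_hyperboloid] by (simp add: lift_eq)

lemma hyp_metric_coords_eq:
  "hyp_metric_coords y = mat 1 - (1 / (height y)\<^sup>2) *\<^sub>R outer_product y y"
  by (simp add: hyp_metric_coords_def outer_product_def pd_lift vec_eq_iff mat_def
      inner_axis_axis power2_eq_square)

lemma Vh_lift_mult_hyp_vol_density: "Vh (lift y) * hyp_vol_density y = 1"
proof -
  have "1 + y \<bullet> y > 0"
    by (simp add: add_pos_nonneg)
  then have "det (hyp_metric_coords y) = 1 / (height y)\<^sup>2"
    by (simp add: hyp_metric_coords_eq det_identity_minus_outer_product height_square field_simps)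
  then show ?thesis
    using height_pos[of y] by (simp add: hyp_vol_density_def Vh_lift real_sqrt_divide)
qed

lemma mink_commute: "mink X Y = mink Y X"
  by (simp add: mink_def inner_commute)

lemma mink_combination_self:
  "mink (a *\<^sub>R X + b *\<^sub>R Y) (a *\<^sub>R X + b *\<^sub>R Y)
     = a\<^sup>2 * mink X X + 2 * a * b * mink X Y + b\<^sup>2 * mink Y Y"
  by (simp add: mink_def inner_commute algebra_simps power2_eq_square)

lemma V_normal_eq_fst:
  assumes X: "X \<in> hyperboloid" and \<nu>: "mink \<nu> \<nu> = 1" "mink X \<nu> = 0"
  shows "V_normal X \<nu> = fst \<nu>"
proof -
  define \<gamma> where "\<gamma> t = cosh t *\<^sub>R X + sinh t *\<^sub>R \<nu>" for t
  define T where "T = {t. fst (\<gamma> t) > 0}"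
  have "open T"
    unfolding T_def \<gamma>_def by (rule open_Collect_less) (auto intro!: continuous_intros)
  moreover have "0 \<in> T"
    using X by (simp add: T_def \<gamma>_def hyperboloid_def)
  moreover have "Vh (\<gamma> t) = fst (\<gamma> t)" if "t \<in> T" for t
  proof (rule Vh_eq_fst)
    have "mink (\<gamma> t) (\<gamma> t) = (sinh t)\<^sup>2 - (cosh t)\<^sup>2"
      using X \<nu> by (simp add: \<gamma>_def mink_combination_self hyperboloid_def)
    then show "\<gamma> t \<in> hyperboloid"
      using that by (simp add: hyperboloid_def T_def cosh_square_eq)
  qed
  moreover have "((\<lambda>t. fst (\<gamma> t)) has_vector_derivative fst \<nu>) (at 0)"
  proof -
    have "((\<lambda>t. cosh t * fst X + sinh t * fst \<nu>) has_real_derivative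
        sinh 0 * fst X + cosh 0 * fst \<nu>) (at 0)"
      by (auto intro!: derivative_eq_intros)
    then show ?thesis
      by (simp add: \<gamma>_def has_real_derivative_iff_has_vector_derivative)
  qed
  ultimately have "((\<lambda>t. Vh (\<gamma> t)) has_vector_derivative fst \<nu>) (at 0)"
    using has_vector_derivative_transform_within_open[of "\<lambda>t. fst (\<gamma> t)" _ 0 T] by metis
  then show ?thesis
    unfolding V_normal_def \<gamma>_def by (rule vector_derivative_at)
qed

lemma smooth_on_differentiable:
  assumes "smooth_on U f" "open U" "u \<in> U"
  shows "f differentiable (at u)"
  using assms by (auto elim: smooth_on.cases simp: differentiable_on_eq_differentiable_at)

lemma smooth_on_pd:
  assumes "smooth_on U f"
  shows "smooth_on U (pd f j)"
proof -
  have "pd f j = (\<lambda>u. frechet_derivative f (at u) (axis j 1))"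
    by (simp add: fun_eq_iff pd_def)
  then show ?thesis
    using assms by (auto elim: smooth_on.cases)
qed

lemma pd_lift_comp:
  assumes "\<phi> differentiable (at u)"
  shows "pd (lift \<circ> \<phi>) j u = ((\<phi> u \<bullet> pd \<phi> j u) / height (\<phi> u), pd \<phi> j u)"
proof -
  have "((lift \<circ> \<phi>) has_derivative
      (\<lambda>v. ((\<phi> u \<bullet> frechet_derivative \<phi> (at u) v) / height (\<phi> u), frechet_derivative \<phi> (at u) v)))
      (at u)"
    using has_derivative_compose[OF assms[unfolded frechet_derivative_works] has_derivative_lift]
    by (simp add: o_def)
  then show ?thesis
    by (simp add: pd_def frechet_derivative_at[symmetric])
qed

definition tangential_coords :: "(real^'m \<Rightarrow> real^'n) \<Rightarrow> real^'m \<Rightarrow> real^'m" where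
  "tangential_coords \<phi> u = (\<chi> i. \<phi> u \<bullet> pd \<phi> i u)"

lemma ghyp_eq:
  assumes "\<phi> differentiable (at u)"
  shows "ghyp \<phi> u = ghat \<phi> u - (1 / (height (\<phi> u))\<^sup>2) *\<^sub>R
           outer_product (tangential_coords \<phi> u) (tangential_coords \<phi> u)"
  using assms
  by (simp add: ghyp_def ghat_def outer_product_def tangential_coords_def pd_lift_comp vec_eq_iff
      power2_eq_square)

lemma pd2_lift_comp:
  assumes U: "open U" "u \<in> U" and \<phi>: "\<forall>v\<in>U. \<phi> differentiable (at v)"
    and pd\<phi>: "pd \<phi> j differentiable (at u)"
  shows "pd2 (lift \<circ> \<phi>) i j u =
    ((pd \<phi> i u \<bullet> pd \<phi> j u + \<phi> u \<bullet> pd2 \<phi> i j u) / height (\<phi> u)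
       - (\<phi> u \<bullet> pd \<phi> i u) * (\<phi> u \<bullet> pd \<phi> j u) / (height (\<phi> u))^3,
     pd2 \<phi> i j u)"
proof -
  define h where "h = height (\<phi> u)"
  define D where "D = frechet_derivative \<phi> (at u)"
  define DP where "DP = frechet_derivative (pd \<phi> j) (at u)"
  have D: "(\<phi> has_derivative D) (at u)"
    using \<phi> U(2) by (simp add: D_def frechet_derivative_works)
  have DP: "(pd \<phi> j has_derivative DP) (at u)"
    using pd\<phi> by (simp add: DP_def frechet_derivative_works)
  have dh: "((\<lambda>v. height (\<phi> v)) has_derivative (\<lambda>w. (\<phi> u \<bullet> D w) / h)) (at u)"
    using has_derivative_compose[OF D has_derivative_height] by (simp add: h_def)
  have "((\<lambda>v. ((\<phi> v \<bullet> pd \<phi> j v) / height (\<phi> v), pd \<phi> j v)) has_derivative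
      (\<lambda>w. ((D w \<bullet> pd \<phi> j u + \<phi> u \<bullet> DP w) / h
             - (\<phi> u \<bullet> pd \<phi> j u) * (\<phi> u \<bullet> D w) / h ^ 3, DP w))) (at u)"
    using height_pos[of "\<phi> u"]
    by (auto intro!: derivative_eq_intros D DP dh simp: h_def field_simps power3_eq_cube)
  then have "(pd (lift \<circ> \<phi>) j has_derivative
      (\<lambda>w. ((D w \<bullet> pd \<phi> j u + \<phi> u \<bullet> DP w) / h
             - (\<phi> u \<bullet> pd \<phi> j u) * (\<phi> u \<bullet> D w) / h ^ 3, DP w))) (at u)"
    by (rule has_derivative_transform_within_open[OF _ U]) (simp add: \<phi> pd_lift_comp)
  then show ?thesis
    by (simp add: pd2_def pd_def[of _ i] frechet_derivative_at[symmetric] D_def DP_def h_def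
        mult.commute)
qed

section \<open>Defining functions and outward directions\<close>

lemma continuous_at_le_on_closure:
  fixes f :: "'a::t2_space \<Rightarrow> real"
  assumes f: "continuous (at x) f" and x: "x \<in> closure A" and le: "\<forall>y\<in>A. f y \<le> c"
  shows "f x \<le> c"
proof (cases "x \<in> A")
  case False
  then have "at x within A \<noteq> bot"
    using x by (simp add: closure_def trivial_limit_within)
  moreover have "(f \<longlongrightarrow> f x) (at x within A)"
    using f continuous_at_imp_continuous_at_within continuous_within by blast
  moreover have "eventually (\<lambda>y. f y \<le> c) (at x within A)"
    using le by (auto simp: eventually_at_filter)
  ultimately show ?thesis
    using tendsto_upperbound by blast
qed (use le in auto)

lemma outward_derivative_nonneg:
  fixes \<rho> :: "real^'n \<Rightarrow> real"
  assumes W: "open W" "p \<in> W" and S: "S \<inter> W = {y\<in>W. \<rho> y < 0}" and "\<rho> p \<le> 0"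
    and \<rho>: "(\<rho> has_derivative L) (at p)" and out: "outward S p w"
  shows "L w \<ge> 0"
proof -
  define g where "g t = \<rho> (p + t *\<^sub>R w)" for t
  have "((\<lambda>t. p + t *\<^sub>R w) has_derivative (\<lambda>t. t *\<^sub>R w)) (at 0)"
    by (auto intro!: derivative_eq_intros)
  then have "(g has_derivative (\<lambda>t. L (t *\<^sub>R w))) (at 0)"
    unfolding g_def using has_derivative_compose[of "\<lambda>t. p + t *\<^sub>R w" _ 0 UNIV \<rho> L] \<rho>
    by simp
  moreover have "(\<lambda>t. L (t *\<^sub>R w)) = (*) (L w)"
    using has_derivative_linear[OF \<rho>] by (simp add: fun_eq_iff linear_scale)
  ultimately have "(g has_field_derivative L w) (at 0)"
    by (simp add: has_field_derivative_def)
  then have "((\<lambda>t. (g t - g 0) / t) \<longlongrightarrow> L w) (at_right 0)"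
    using filterlim_at_split by (auto simp: has_field_derivative_iff)
  moreover have "eventually (\<lambda>t. (g t - g 0) / t \<ge> 0) (at_right 0)"
  proof -
    obtain \<epsilon> where "\<epsilon> > 0" and \<epsilon>: "\<forall>t. 0 < t \<and> t < \<epsilon> \<longrightarrow> p + t *\<^sub>R w \<notin> S"
      using out unfolding outward_def by blast
    have "((\<lambda>t. p + t *\<^sub>R w) \<longlongrightarrow> p) (at_right 0)"
      by (auto intro!: tendsto_eq_intros)
    then have "eventually (\<lambda>t. p + t *\<^sub>R w \<in> W) (at_right 0)"
      using W by (rule topological_tendstoD)
    moreover have "eventually (\<lambda>t. 0 < t \<and> t < \<epsilon>) (at_right (0::real))"
      using \<open>\<epsilon> > 0\<close> eventually_at_right_field by blast
    ultimately show ?thesis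
    proof eventually_elim
      case (elim t)
      then have "g t \<ge> 0"
        using \<epsilon> S unfolding g_def by fastforce
      then show ?case
        using elim \<open>\<rho> p \<le> 0\<close> by (simp add: g_def)
    qed
  qed
  ultimately show ?thesis
    by (rule tendsto_lowerbound) simp
qed

lemma orthonormal_frame_expansion:
  fixes e :: "'m::finite \<Rightarrow> real^'n" and n :: "real^'n"
  assumes dim: "CARD('n) = CARD('m) + 1"
    and e: "\<forall>i j. e i \<bullet> e j = (if i = j then 1 else 0)" and n: "norm n = 1" "\<forall>i. n \<bullet> e i = 0"
  shows "v = (v \<bullet> n) *\<^sub>R n + (\<Sum>i\<in>UNIV. (v \<bullet> e i) *\<^sub>R e i)"
proof -
  define B where "B = insert n (range e)"
  have "inj e"
    using e by (metis injI zero_neq_one)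
  moreover have "n \<notin> range e"
    using e n by (metis (mono_tags) inner_commute image_iff norm_eq_1 zero_neq_one)
  ultimately have card: "card B = CARD('n)"
    using dim by (simp add: B_def card_image)
  have orth: "pairwise orthogonal B"
    using e n by (auto simp: B_def pairwise_def orthogonal_def inner_commute)
  have unit: "norm b = 1" if "b \<in> B" for b
    using that e n by (auto simp: B_def norm_eq_1)
  then have "independent B"
    by (metis orth pairwise_orthogonal_independent norm_zero zero_neq_one)
  then have "UNIV \<subseteq> span B"
    by (rule card_ge_dim_independent[OF subset_UNIV]) (simp add: card)
  then have "(\<Sum>b\<in>B. (v \<bullet> b) *\<^sub>R b) = v"
    by (intro orthonormal_basis_expand[OF orth unit]) (auto simp: B_def)
  then have "v = (\<Sum>b\<in>B. (v \<bullet> b) *\<^sub>R b)" ..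
  also have "\<dots> = (v \<bullet> n) *\<^sub>R n + (\<Sum>i\<in>UNIV. (v \<bullet> e i) *\<^sub>R e i)"
    using \<open>inj e\<close> \<open>n \<notin> range e\<close> by (simp add: B_def sum.reindex)
  finally show ?thesis .
qed

lemma smooth_bounded_domain_defining_function:
  fixes S :: "(real^'n) set"
  assumes S: "smooth_bounded_domain S" and p: "p \<in> frontier S"
  obtains W and \<rho> :: "real^'n \<Rightarrow> real" and L
  where "open W" "p \<in> W" "S \<inter> W = {y\<in>W. \<rho> y < 0}"
    "(\<rho> has_derivative L) (at p)" "L \<noteq> (\<lambda>_. 0)" "\<rho> p = 0"
proof -
  obtain W and \<rho> :: "real^'n \<Rightarrow> real" where W: "open W" "p \<in> W" and "smooth_on W \<rho>"
    and nz: "\<forall>y\<in>W. frechet_derivative \<rho> (at y) \<noteq> (\<lambda>_. 0)" and SW: "S \<inter> W = {y\<in>W. \<rho> y < 0}"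
    using assms unfolding smooth_bounded_domain_def by blast
  define L where "L = frechet_derivative \<rho> (at p)"
  have \<rho>: "(\<rho> has_derivative L) (at p)"
    using smooth_on_differentiable[OF \<open>smooth_on W \<rho>\<close> W] by (simp add: L_def frechet_derivative_works)
  have "\<rho> p \<le> 0"
  proof (rule continuous_at_le_on_closure[of p \<rho>])
    show "continuous (at p) \<rho>"
      using \<rho> by (rule has_derivative_continuous)
    show "p \<in> closure (W \<inter> S)"
      using p W open_Int_closure_subset[of W S] by (auto simp: frontier_def)
    show "\<forall>y\<in>W \<inter> S. \<rho> y \<le> 0"
      using SW by (auto intro: less_imp_le)
  qed
  moreover have "p \<notin> S"
    using S p by (simp add: smooth_bounded_domain_def frontier_def interior_open)
  then have "\<rho> p \<ge> 0"
    using SW W(2) by (auto simp: not_less[symmetric])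
  ultimately have "\<rho> p = 0"
    by linarith
  moreover have "L \<noteq> (\<lambda>_. 0)"
    using nz W(2) by (simp add: L_def)
  ultimately show ?thesis
    using that[OF W SW \<rho>] by simp
qed

section \<open>A boundary chart with orthonormal frame at a point\<close>

locale orthonormal_chart =
  fixes \<phi> :: "real^'m \<Rightarrow> real^'n" and U :: "(real^'m) set" and u0 :: "real^'m"
    and \<nu>hat :: "real^'n"
  assumes dim: "CARD('n) = CARD('m) + 1"
    and open_U: "open U" and u0_in_U: "u0 \<in> U" and smooth: "smooth_on U \<phi>"
    and ghat_u0: "ghat \<phi> u0 = mat 1"
    and norm_\<nu>hat: "norm \<nu>hat = 1" and \<nu>hat_orthogonal: "\<forall>i. \<nu>hat \<bullet> pd \<phi> i u0 = 0"
begin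

lemma \<phi>_differentiable: "u \<in> U \<Longrightarrow> \<phi> differentiable (at u)"
  using smooth open_U by (rule smooth_on_differentiable)

lemma frame_orthonormal: "pd \<phi> i u0 \<bullet> pd \<phi> j u0 = (if i = j then 1 else 0)"
  using ghat_u0 by (simp add: ghat_def mat_def vec_eq_iff)

lemma frame_expansion:
  "v = (v \<bullet> \<nu>hat) *\<^sub>R \<nu>hat + (\<Sum>i\<in>UNIV. (v \<bullet> pd \<phi> i u0) *\<^sub>R pd \<phi> i u0)"
  using dim frame_orthonormal norm_\<nu>hat \<nu>hat_orthogonal by (intro orthonormal_frame_expansion) auto

lemma inner_self_split:
  "\<phi> u0 \<bullet> \<phi> u0 = (\<phi> u0 \<bullet> \<nu>hat)\<^sup>2 + tangential_coords \<phi> u0 \<bullet> tangential_coords \<phi> u0"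
proof -
  have "\<phi> u0 \<bullet> \<phi> u0 = \<phi> u0 \<bullet> ((\<phi> u0 \<bullet> \<nu>hat) *\<^sub>R \<nu>hat
      + (\<Sum>i\<in>UNIV. (\<phi> u0 \<bullet> pd \<phi> i u0) *\<^sub>R pd \<phi> i u0))"
    by (subst frame_expansion) rule
  moreover have "tangential_coords \<phi> u0 \<bullet> tangential_coords \<phi> u0
      = (\<Sum>i\<in>UNIV. (\<phi> u0 \<bullet> pd \<phi> i u0) * (\<phi> u0 \<bullet> pd \<phi> i u0))"
    by (simp add: tangential_coords_def inner_vec_def)
  ultimately show ?thesis
    by (simp add: inner_add_right inner_sum_right power2_eq_square)
qed

lemma det_ghyp: "det (ghyp \<phi> u0) = (1 + (\<phi> u0 \<bullet> \<nu>hat)\<^sup>2) / (height (\<phi> u0))\<^sup>2"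
proof -
  have "det (ghyp \<phi> u0)
      = 1 - tangential_coords \<phi> u0 \<bullet> tangential_coords \<phi> u0 / (height (\<phi> u0))\<^sup>2"
    using \<phi>_differentiable[OF u0_in_U]
    by (simp add: ghyp_eq ghat_u0 det_identity_minus_outer_product)
  also have "\<dots> = ((height (\<phi> u0))\<^sup>2 - tangential_coords \<phi> u0 \<bullet> tangential_coords \<phi> u0)
      / (height (\<phi> u0))\<^sup>2"
    using height_pos[of "\<phi> u0"] by (simp add: field_simps)
  also have "\<dots> = (1 + (\<phi> u0 \<bullet> \<nu>hat)\<^sup>2) / (height (\<phi> u0))\<^sup>2"
    by (simp add: height_square inner_self_split)
  finally show ?thesis .
qed

lemma unit_normal_eq:
  assumes unit: "mink \<nu> \<nu> = 1" and normal: "mink \<nu> (lift (\<phi> u0)) = 0"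
    and tangent: "\<forall>i. mink \<nu> (pd (lift \<circ> \<phi>) i u0) = 0"
  obtains \<beta> where "\<beta>\<^sup>2 * (1 + (\<phi> u0 \<bullet> \<nu>hat)\<^sup>2) = 1"
    and "\<nu> = \<beta> *\<^sub>R ((\<phi> u0 \<bullet> \<nu>hat) * height (\<phi> u0), \<nu>hat + (\<phi> u0 \<bullet> \<nu>hat) *\<^sub>R \<phi> u0)"
proof -
  define x where "x = \<phi> u0"
  define h where "h = height x"
  obtain \<nu>0 \<nu>' where \<nu>: "\<nu> = (\<nu>0, \<nu>')"
    by fastforce
  define k where "k = \<nu>0 / h"
  define \<beta> where "\<beta> = (\<nu>' - k *\<^sub>R x) \<bullet> \<nu>hat"
  have h: "h > 0" "h\<^sup>2 = 1 + x \<bullet> x"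
    by (simp_all add: h_def height_pos height_square)
  have "(\<nu>' - k *\<^sub>R x) \<bullet> pd \<phi> i u0 = 0" for i
    using tangent h(1) \<phi>_differentiable[OF u0_in_U]
    by (simp add: \<nu> pd_lift_comp inner_diff_left k_def x_def h_def field_simps)
  then have \<nu>': "\<nu>' = \<beta> *\<^sub>R \<nu>hat + k *\<^sub>R x"
    using frame_expansion[of "\<nu>' - k *\<^sub>R x"] by (simp add: \<beta>_def algebra_simps)
  have "k * h\<^sup>2 = \<beta> * (x \<bullet> \<nu>hat) + k * (x \<bullet> x)"
    using normal h(1)
    by (simp add: \<nu> \<nu>' lift_eq k_def x_def h_def inner_add_right inner_commute power2_eq_square)
  then have k: "k = \<beta> * (x \<bullet> \<nu>hat)"
    by (simp add: h(2) algebra_simps)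
  have "\<beta>\<^sup>2 * (1 + (x \<bullet> \<nu>hat)\<^sup>2)
      = \<beta>\<^sup>2 * (1 + 2 * (x \<bullet> \<nu>hat)\<^sup>2 + (x \<bullet> \<nu>hat)\<^sup>2 * (x \<bullet> x))
        - \<beta>\<^sup>2 * (x \<bullet> \<nu>hat)\<^sup>2 * (1 + x \<bullet> x)"
    by (simp add: algebra_simps)
  also have "\<dots> = \<nu>' \<bullet> \<nu>' - (k * h)\<^sup>2"
  proof -
    have "(k * h)\<^sup>2 = \<beta>\<^sup>2 * (x \<bullet> \<nu>hat)\<^sup>2 * (1 + x \<bullet> x)"
      by (simp add: k h(2) power_mult_distrib)
    then show ?thesis
      using norm_\<nu>hat
      by (simp add: \<nu>' k inner_add_left inner_add_right inner_commute norm_eq_1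
          algebra_simps power2_eq_square)
  qed
  also have "\<dots> = 1"
    using unit h(1) by (simp add: \<nu> k_def power2_eq_square)
  finally have "\<beta>\<^sup>2 * (1 + (x \<bullet> \<nu>hat)\<^sup>2) = 1" .
  moreover have "\<nu> = \<beta> *\<^sub>R ((x \<bullet> \<nu>hat) * h, \<nu>hat + (x \<bullet> \<nu>hat) *\<^sub>R x)"
  proof -
    have "\<nu>0 = k * h"
      using h(1) by (simp add: k_def)
    then show ?thesis
      by (simp add: \<nu> \<nu>' k algebra_simps)
  qed
  ultimately show ?thesis
    using that by (simp add: x_def h_def)
qed

lemma hhyp_eq:
  assumes \<nu>: "\<nu> = \<beta> *\<^sub>R ((\<phi> u0 \<bullet> \<nu>hat) * height (\<phi> u0), \<nu>hat + (\<phi> u0 \<bullet> \<nu>hat) *\<^sub>R \<phi> u0)"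
  shows "hhyp \<phi> \<nu> u0 = (\<beta> * (\<phi> u0 \<bullet> \<nu>hat)) *\<^sub>R ghyp \<phi> u0 + \<beta> *\<^sub>R hhat \<phi> \<nu>hat u0"
proof -
  have "pd \<phi> j differentiable (at u0)" for j
    using smooth_on_differentiable[OF smooth_on_pd[OF smooth] open_U u0_in_U] .
  then have "pd2 (lift \<circ> \<phi>) i j u0 =
      ((pd \<phi> i u0 \<bullet> pd \<phi> j u0 + \<phi> u0 \<bullet> pd2 \<phi> i j u0) / height (\<phi> u0)
         - (\<phi> u0 \<bullet> pd \<phi> i u0) * (\<phi> u0 \<bullet> pd \<phi> j u0) / (height (\<phi> u0))^3,
       pd2 \<phi> i j u0)" for i j
    using \<phi>_differentiable open_U u0_in_U by (intro pd2_lift_comp) auto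
  then show ?thesis
    using height_pos[of "\<phi> u0"] \<phi>_differentiable[OF u0_in_U]
    by (simp add: vec_eq_iff hhyp_def hhat_def ghyp_eq ghat_def outer_product_def
        tangential_coords_def \<nu> inner_add_right inner_commute field_simps power3_eq_cube
        power2_eq_square)
qed

lemma outward_inner_normal_nonneg:
  assumes S: "smooth_bounded_domain S" "\<phi> ` U \<subseteq> frontier S"
    and out: "outward S (\<phi> u0) \<nu>hat" "outward S (\<phi> u0) w"
  shows "w \<bullet> \<nu>hat \<ge> 0"
proof -
  have "\<phi> u0 \<in> frontier S"
    using S(2) u0_in_U by blast
  with S(1) obtain W and \<rho> :: "real^'n \<Rightarrow> real" and L
    where W: "open W" "\<phi> u0 \<in> W" and SW: "S \<inter> W = {y\<in>W. \<rho> y < 0}"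
    and \<rho>: "(\<rho> has_derivative L) (at (\<phi> u0))" "L \<noteq> (\<lambda>_. 0)" "\<rho> (\<phi> u0) = 0"
    by (rule smooth_bounded_domain_defining_function)
  have "open S"
    using S(1) by (simp add: smooth_bounded_domain_def)
  have D\<phi>: "(\<phi> has_derivative frechet_derivative \<phi> (at u0)) (at u0)"
    using \<phi>_differentiable[OF u0_in_U] by (simp add: frechet_derivative_works)
  have "eventually (\<lambda>u. \<phi> u \<in> W \<and> u \<in> U) (at u0)"
    using topological_tendstoD[OF has_derivative_continuous[OF D\<phi>, unfolded continuous_at] W]
      eventually_at_in_open'[OF open_U u0_in_U] by (rule eventually_conj)
  then have "eventually (\<lambda>u. \<rho> (\<phi> u0) \<le> \<rho> (\<phi> u)) (at u0)"
  proof eventually_elim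
    case (elim u)
    then have "\<phi> u \<notin> S"
      using S(2) \<open>open S\<close> by (auto simp: frontier_def interior_open)
    then have "\<phi> u \<notin> {y\<in>W. \<rho> y < 0}"
      using SW by blast
    then show ?case
      using elim \<rho>(3) by simp
  qed
  then have "(\<lambda>h. L (frechet_derivative \<phi> (at u0) h)) = (\<lambda>h. 0)"
    by (rule has_derivative_local_min[OF has_derivative_compose[OF D\<phi> \<rho>(1)]])
  then have tangential: "L (pd \<phi> i u0) = 0" for i
    by (simp add: pd_def fun_eq_iff)
  have L: "L v = (v \<bullet> \<nu>hat) * L \<nu>hat" for v
  proof -
    have "L v = L ((v \<bullet> \<nu>hat) *\<^sub>R \<nu>hat + (\<Sum>i\<in>UNIV. (v \<bullet> pd \<phi> i u0) *\<^sub>R pd \<phi> i u0))"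
      using arg_cong[OF frame_expansion[of v], of L] .
    also have "\<dots> = (v \<bullet> \<nu>hat) * L \<nu>hat"
      using has_derivative_linear[OF \<rho>(1)] by (simp add: linear_add linear_scale linear_sum tangential)
    finally show ?thesis .
  qed
  have "L \<nu>hat \<ge> 0" "L w \<ge> 0"
    using outward_derivative_nonneg[OF W SW _ \<rho>(1)] \<rho>(3) out by auto
  moreover have "L \<nu>hat \<noteq> 0"
  proof
    assume "L \<nu>hat = 0"
    then have "L = (\<lambda>_. 0)"
      using L by (metis mult_zero_right)
    with \<rho>(2) show False ..
  qed
  ultimately show ?thesis
    using L[of w] by (simp add: zero_le_mult_iff)
qed

lemma outward_unit_normal_eq:
  assumes S: "smooth_bounded_domain S" "\<phi> ` U \<subseteq> frontier S" "outward S (\<phi> u0) \<nu>hat"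
    and \<nu>: "mink \<nu> \<nu> = 1" "mink \<nu> (lift (\<phi> u0)) = 0" "\<forall>i. mink \<nu> (pd (lift \<circ> \<phi>) i u0) = 0"
      "outward S (\<phi> u0) (snd \<nu>)"
  shows "\<nu> = (1 / sqrt (1 + (\<phi> u0 \<bullet> \<nu>hat)\<^sup>2)) *\<^sub>R
           ((\<phi> u0 \<bullet> \<nu>hat) * height (\<phi> u0), \<nu>hat + (\<phi> u0 \<bullet> \<nu>hat) *\<^sub>R \<phi> u0)"
proof -
  define uh where "uh = \<phi> u0 \<bullet> \<nu>hat"
  have "1 + uh\<^sup>2 > 0"
    by (simp add: add_pos_nonneg)
  obtain \<beta> where \<beta>: "\<beta>\<^sup>2 * (1 + uh\<^sup>2) = 1"
    and \<nu>_eq: "\<nu> = \<beta> *\<^sub>R (uh * height (\<phi> u0), \<nu>hat + uh *\<^sub>R \<phi> u0)"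
    using unit_normal_eq[OF \<nu>(1-3)] unfolding uh_def .
  have "0 \<le> snd \<nu> \<bullet> \<nu>hat"
    using S \<nu>(4) by (rule outward_inner_normal_nonneg)
  also have "snd \<nu> \<bullet> \<nu>hat = \<beta> * (1 + uh\<^sup>2)"
    using norm_\<nu>hat
    by (simp add: \<nu>_eq uh_def inner_add_left norm_eq_1 inner_commute power2_eq_square algebra_simps)
  finally have "\<beta> \<ge> 0"
    using \<open>1 + uh\<^sup>2 > 0\<close> by (simp add: zero_le_mult_iff)
  moreover have "\<beta>\<^sup>2 = 1 / (1 + uh\<^sup>2)"
    using \<beta> \<open>1 + uh\<^sup>2 > 0\<close> by (simp add: field_simps)
  ultimately have "\<beta> = 1 / sqrt (1 + uh\<^sup>2)"
    by (metis real_sqrt_unique real_sqrt_divide real_sqrt_one)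
  then show ?thesis
    using \<nu>_eq by (simp add: uh_def)
qed

lemma Vh_hhyp_minus_V_normal_ghyp:
  assumes \<nu>: "mink \<nu> \<nu> = 1" "mink \<nu> (lift (\<phi> u0)) = 0"
    and \<nu>_eq: "\<nu> = \<beta> *\<^sub>R ((\<phi> u0 \<bullet> \<nu>hat) * height (\<phi> u0), \<nu>hat + (\<phi> u0 \<bullet> \<nu>hat) *\<^sub>R \<phi> u0)"
  shows "Vh (lift (\<phi> u0)) *\<^sub>R hhyp \<phi> \<nu> u0 - V_normal (lift (\<phi> u0)) \<nu> *\<^sub>R ghyp \<phi> u0
           = (\<beta> * height (\<phi> u0)) *\<^sub>R hhat \<phi> \<nu>hat u0"
proof -
  have "V_normal (lift (\<phi> u0)) \<nu> = \<beta> * (\<phi> u0 \<bullet> \<nu>hat) * height (\<phi> u0)"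
    using V_normal_eq_fst[OF lift_in_hyperboloid \<nu>(1)] \<nu>(2) by (simp add: mink_commute \<nu>_eq)
  then show ?thesis
    by (simp add: Vh_lift hhyp_eq[OF \<nu>_eq] algebra_simps)
qed

end

theorem lemma2p2:
  fixes K :: "(real \<times> (real^'n)) set"
    and U :: "(real^'m) set"
    and \<phi> :: "real^'m \<Rightarrow> real^'n"
    and u0 :: "real^'m"
    and \<nu>hat :: "real^'n"
    and \<nu> :: "real \<times> (real^'n)"
  assumes dimn: "CARD('n) = CARD('m) + 1"
    and K: "hyp_smooth_bounded_domain K"
    and U: "open U" "u0 \<in> U"
    and chart: "smooth_on U \<phi>" "inj_on \<phi> U"
      "\<forall>u\<in>U. inj (frechet_derivative \<phi> (at u))"
      "\<phi> ` U \<subseteq> frontier (proj ` K)"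
    and nuhat: "norm \<nu>hat = 1" "\<forall>i. \<nu>hat \<bullet> pd \<phi> i u0 = 0"
      "outward (proj ` K) (\<phi> u0) \<nu>hat"
    and nu: "mink \<nu> \<nu> = 1" "mink \<nu> (lift (\<phi> u0)) = 0"
      "\<forall>i. mink \<nu> (pd (lift \<circ> \<phi>) i u0) = 0"
      "hyp_outward K (lift (\<phi> u0)) \<nu>"
    and normal_coords: "ghat \<phi> u0 = mat 1"
  shows
    "(\<forall>x\<in>proj ` K. Vh (lift x) * hyp_vol_density x = 1)
     \<and> sqrt (det (ghyp \<phi> u0)) =
         sqrt ((1 + (\<phi> u0 \<bullet> \<nu>hat)\<^sup>2) / (1 + (norm (\<phi> u0))\<^sup>2)) * sqrt (det (ghat \<phi> u0))
     \<and> Vh (lift (\<phi> u0)) *\<^sub>R hhyp \<phi> \<nu> u0 - V_normal (lift (\<phi> u0)) \<nu> *\<^sub>R ghyp \<phi> u0 =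
         sqrt ((1 + (norm (\<phi> u0))\<^sup>2) / (1 + (\<phi> u0 \<bullet> \<nu>hat)\<^sup>2)) *\<^sub>R hhat \<phi> \<nu>hat u0
     \<and> gauss_kronecker (ghyp \<phi> u0)
         (Vh (lift (\<phi> u0)) *\<^sub>R hhyp \<phi> \<nu> u0 - V_normal (lift (\<phi> u0)) \<nu> *\<^sub>R ghyp \<phi> u0) =
       ((1 + (norm (\<phi> u0))\<^sup>2) / (1 + (\<phi> u0 \<bullet> \<nu>hat)\<^sup>2)) powr ((real CARD('n) + 1) / 2)
         * gauss_kronecker (ghat \<phi> u0) (hhat \<phi> \<nu>hat u0)"
proof -
  interpret orthonormal_chart \<phi> U u0 \<nu>hat
    using dimn U chart(1) normal_coords nuhat(1,2) by unfold_locales auto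
  define uh where "uh = \<phi> u0 \<bullet> \<nu>hat"
  define q where "q = sqrt ((1 + (norm (\<phi> u0))\<^sup>2) / (1 + uh\<^sup>2))"
  have "1 + uh\<^sup>2 > 0"
    by (simp add: add_pos_nonneg)
  then have "q > 0"
    by (simp add: q_def add_pos_nonneg)
  have \<nu>_eq: "\<nu> = (1 / sqrt (1 + uh\<^sup>2)) *\<^sub>R (uh * height (\<phi> u0), \<nu>hat + uh *\<^sub>R \<phi> u0)"
    using K chart(4) nuhat(3) nu unfolding uh_def
    by (intro outward_unit_normal_eq[of "proj ` K"])
      (simp_all add: hyp_smooth_bounded_domain_def hyp_outward_def proj_def lift_eq)
  have curv: "Vh (lift (\<phi> u0)) *\<^sub>R hhyp \<phi> \<nu> u0 - V_normal (lift (\<phi> u0)) \<nu> *\<^sub>R ghyp \<phi> u0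
      = q *\<^sub>R hhat \<phi> \<nu>hat u0"
    using Vh_hhyp_minus_V_normal_ghyp[OF nu(1,2) \<nu>_eq[unfolded uh_def]]
    by (simp add: q_def uh_def height_def real_sqrt_divide)
  have q2: "(1 + (norm (\<phi> u0))\<^sup>2) / (1 + uh\<^sup>2) = q\<^sup>2"
    using \<open>1 + uh\<^sup>2 > 0\<close> by (simp add: q_def)
  have det: "det (ghyp \<phi> u0) = (1 + uh\<^sup>2) / (1 + (norm (\<phi> u0))\<^sup>2)"
    by (simp add: det_ghyp uh_def height_def)
  have "det (ghyp \<phi> u0) = 1 / q\<^sup>2"
    unfolding det q2[symmetric] by simp
  then have "gauss_kronecker (ghyp \<phi> u0) (q *\<^sub>R hhat \<phi> \<nu>hat u0)
      = q ^ (CARD('m) + 2) * gauss_kronecker (ghat \<phi> u0) (hhat \<phi> \<nu>hat u0)"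
    using \<open>q > 0\<close>
    by (simp add: gauss_kronecker_scaleR normal_coords gauss_kronecker_identity power_add
        power2_eq_square)
  also have "q ^ (CARD('m) + 2) = (q\<^sup>2) powr ((real CARD('n) + 1) / 2)"
    using square_powr_half[OF \<open>q > 0\<close>, of "CARD('m) + 2"] by (simp add: dimn add_ac)
  finally show ?thesis
    using det q2 \<open>q > 0\<close>
    by (simp add: Vh_lift_mult_hyp_vol_density curv uh_def[symmetric] normal_coords real_sqrt_divide)
qed

end
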